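(* Let $G$ be a cubic graph and let $Z$ be a set of $3$ vertices disjoint from $V(G)$. (i) If $G$ is $3$-edge colourable, then $\overline{K_Z}\vee G$ has a $K_3$-decomposition. (ii) If $G$ is not $3$-edge colourable, then the leave of any $K_3$-packing of $\overline{K_Z}\vee G$ contains an edge incident with a vertex in $Z$.
   Context: $\overline{K_Z}$ is the graph with vertex set $Z$ and no edges. For vertex-disjoint graphs $G,H$, $G\vee H$ has vertex set $V(G)\cup V(H)$ and edge set $E(G)\cup E(H)\cup\{xy:x\in V(G),y\in V(H)\}$. A $K_3$-decomposition of a graph is a set of triangles such that each edge lies in exactly one; a $K_3$-packing of $G$ is a $K_3$-decomposition of some subgraph $H$ of $G$, and its leave is the graph $G-H$ (vertex set $V(G)$, edge set $E(G)\setminus E(H)$). Edge colourings are proper. *)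

theory Defs
  imports Main
begin

type_synonym 'a graph = "'a set \<times> 'a set set"

definition verts :: "'a graph \<Rightarrow> 'a set" where "verts G = fst G"
definition edges :: "'a graph \<Rightarrow> 'a set set" where "edges G = snd G"

definition simple_graph :: "'a graph \<Rightarrow> bool" where
  "simple_graph G \<longleftrightarrow> finite (verts G) \<and> (\<forall>e\<in>edges G. e \<subseteq> verts G \<and> card e = 2)"

definition degree :: "'a graph \<Rightarrow> 'a \<Rightarrow> nat" where
  "degree G v = card {e \<in> edges G. v \<in> e}"

definition cubic :: "'a graph \<Rightarrow> bool" where
  "cubic G \<longleftrightarrow> simple_graph G \<and> (\<forall>v\<in>verts G. degree G v = 3)"

definition proper_edge_colouring :: "'a graph \<Rightarrow> nat \<Rightarrow> ('a set \<Rightarrow> nat) \<Rightarrow> bool" where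
  "proper_edge_colouring G k c \<longleftrightarrow>
     (\<forall>e\<in>edges G. c e < k) \<and>
     (\<forall>e\<in>edges G. \<forall>f\<in>edges G. e \<noteq> f \<and> e \<inter> f \<noteq> {} \<longrightarrow> c e \<noteq> c f)"

definition edge_colourable :: "'a graph \<Rightarrow> nat \<Rightarrow> bool" where
  "edge_colourable G k \<longleftrightarrow> (\<exists>c. proper_edge_colouring G k c)"

definition empty_graph :: "'a set \<Rightarrow> 'a graph" where
  "empty_graph Z = (Z, {})"

definition join :: "'a graph \<Rightarrow> 'a graph \<Rightarrow> 'a graph" where
  "join G H = (verts G \<union> verts H,
               edges G \<union> edges H \<union> {{x, y} | x y. x \<in> verts G \<and> y \<in> verts H})"

text \<open>A triangle is represented by its 3-element vertex set; its edges are its 2-subsets.\<close>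
definition tri_edges :: "'a set \<Rightarrow> 'a set set" where
  "tri_edges T = {e. e \<subseteq> T \<and> card e = 2}"

definition is_triangle_in :: "'a graph \<Rightarrow> 'a set \<Rightarrow> bool" where
  "is_triangle_in G T \<longleftrightarrow> card T = 3 \<and> T \<subseteq> verts G \<and> tri_edges T \<subseteq> edges G"

definition K3_decomposition :: "'a graph \<Rightarrow> 'a set set \<Rightarrow> bool" where
  "K3_decomposition G \<T> \<longleftrightarrow>
     (\<forall>T\<in>\<T>. is_triangle_in G T) \<and> (\<forall>e\<in>edges G. \<exists>!T. T \<in> \<T> \<and> e \<in> tri_edges T)"

definition subgraph :: "'a graph \<Rightarrow> 'a graph \<Rightarrow> bool" where
  "subgraph H G \<longleftrightarrow> verts H \<subseteq> verts G \<and> edges H \<subseteq> edges G \<and> simple_graph H"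

definition K3_packing :: "'a graph \<Rightarrow> 'a graph \<Rightarrow> 'a set set \<Rightarrow> bool" where
  "K3_packing G H \<T> \<longleftrightarrow> subgraph H G \<and> K3_decomposition H \<T>"

definition leave :: "'a graph \<Rightarrow> 'a graph \<Rightarrow> 'a graph" where
  "leave G H = (verts G, edges G - edges H)"

end

theory Submission
  imports Defs
begin

text \<open>The argument works for any \<open>k\<close>-regular G with \<open>|Z| = k\<close>; label Z by the colours
  \<open>0, \<dots>, k - 1\<close> through a bijection \<open>\<zeta>\<close>. Given a proper \<open>k\<close>-edge colouring \<open>c\<close>, the
  triangles \<open>e \<union> {\<zeta> (c e)}\<close> cover each edge of G once, and the edge \<open>\<zeta> i y\<close> exactly once,
  namely by the triangle on the unique edge at \<open>y\<close> of colour \<open>i\<close>. Conversely, suppose a packing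
  uses every edge at Z. At a vertex \<open>v\<close>, the triangles through the \<open>k\<close> edges \<open>z v\<close> are
  \<open>{z, v, w\<^sub>z}\<close> with pairwise distinct edges \<open>v w\<^sub>z\<close> of G, so these are all edges at \<open>v\<close>.
  Hence every edge of G spans a packed triangle with some apex in Z, and colouring it by that
  apex is proper: adjacent edges with a common apex \<open>z\<close> would give two triangles sharing the
  edge from \<open>z\<close> to their common end.\<close>

lemma tri_edges_triple:
  assumes "x \<noteq> y" "x \<noteq> w" "y \<noteq> w"
  shows "tri_edges {x, y, w} = {{x, y}, {x, w}, {y, w}}"
proof
  show "tri_edges {x, y, w} \<subseteq> {{x, y}, {x, w}, {y, w}}"
  proof
    fix e assume "e \<in> tri_edges {x, y, w}"
    then have "e \<subseteq> {x, y, w}" "card e = 2" by (auto simp: tri_edges_def)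
    then obtain p q where "e = {p, q}" "p \<noteq> q" "{p, q} \<subseteq> {x, y, w}" by (auto simp: card_2_iff)
    then show "e \<in> {{x, y}, {x, w}, {y, w}}" by auto
  qed
  show "{{x, y}, {x, w}, {y, w}} \<subseteq> tri_edges {x, y, w}"
    using assms by (auto simp: tri_edges_def)
qed

lemma doubleton_in_tri_edges: "x \<noteq> y \<Longrightarrow> x \<in> T \<Longrightarrow> y \<in> T \<Longrightarrow> {x, y} \<in> tri_edges T"
  by (auto simp: tri_edges_def)

lemma card_3_obtain_third:
  assumes "card T = 3" "x \<in> T" "y \<in> T" "x \<noteq> y"
  obtains w where "T = {x, y, w}" "w \<noteq> x" "w \<noteq> y"
proof -
  have "card (T - {x, y}) = 1"
    using assms by (simp add: card_Diff_subset card.infinite[of T, symmetric])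
  then obtain w where "T - {x, y} = {w}" by (auto simp: card_1_singleton_iff)
  then show thesis using assms that[of w] by blast
qed

lemma K3_decomposition_triangle_eq:
  assumes "K3_decomposition H \<T>" "T1 \<in> \<T>" "T2 \<in> \<T>"
    and "x \<noteq> y" "x \<in> T1" "y \<in> T1" "x \<in> T2" "y \<in> T2"
  shows "T1 = T2"
proof -
  have "{x, y} \<in> edges H"
    using assms doubleton_in_tri_edges[of x y T1] by (auto simp: K3_decomposition_def is_triangle_in_def)
  then show ?thesis
    using assms doubleton_in_tri_edges[of x y] unfolding K3_decomposition_def by blast
qed

lemma proper_edge_colouring_bij_betw_star:
  assumes "proper_edge_colouring G k c" "degree G v = k"
  shows "bij_betw c {e \<in> edges G. v \<in> e} {..<k}"
proof -
  let ?S = "{e \<in> edges G. v \<in> e}"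
  have inj: "inj_on c ?S" and sub: "c ` ?S \<subseteq> {..<k}"
    using assms(1) by (auto simp: proper_edge_colouring_def inj_on_def)
  have "card (c ` ?S) = card {..<k}"
    using card_image[OF inj] assms(2) by (simp add: degree_def)
  with sub have "c ` ?S = {..<k}" by (simp add: card_subset_eq)
  with inj show ?thesis by (simp add: bij_betw_def)
qed

locale regular_join =
  fixes G :: "'a graph" and k :: nat and Z :: "'a set" and \<zeta> :: "nat \<Rightarrow> 'a"
  assumes simple: "simple_graph G"
    and regular: "\<And>v. v \<in> verts G \<Longrightarrow> degree G v = k"
    and apex_bij: "bij_betw \<zeta> {..<k} Z"
    and disjoint: "Z \<inter> verts G = {}"
begin

abbreviation J :: "'a graph" where "J \<equiv> join (empty_graph Z) G"

lemma verts_J: "verts J = Z \<union> verts G"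
  by (simp add: join_def verts_def empty_graph_def)

lemma edges_J: "edges J = edges G \<union> {{z, v} |z v. z \<in> Z \<and> v \<in> verts G}"
  by (simp add: join_def verts_def edges_def empty_graph_def)

lemma edge_G_obtain:
  assumes "e \<in> edges G"
  obtains u v where "e = {u, v}" "u \<noteq> v" "u \<in> verts G" "v \<in> verts G"
proof -
  have "card e = 2" "e \<subseteq> verts G" using assms simple by (auto simp: simple_graph_def)
  then show thesis using that by (auto simp: card_2_iff)
qed

lemma edge_G_subset: "e \<in> edges G \<Longrightarrow> e \<subseteq> verts G"
  using simple by (simp add: simple_graph_def)

lemma card_edge_G: "e \<in> edges G \<Longrightarrow> card e = 2"
  using simple by (simp add: simple_graph_def)

lemma apex_notin_edge: "z \<in> Z \<Longrightarrow> e \<in> edges G \<Longrightarrow> z \<notin> e"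
  using edge_G_subset disjoint by blast

lemma finite_star: "finite {e \<in> edges G. v \<in> e}"
proof -
  have "edges G \<subseteq> Pow (verts G)" using simple by (auto simp: simple_graph_def)
  then show ?thesis using simple by (auto simp: simple_graph_def intro: finite_subset)
qed

lemma card_star: "v \<in> verts G \<Longrightarrow> card {e \<in> edges G. v \<in> e} = k"
  using regular by (simp add: degree_def)

lemma apex_edge_in_J: "z \<in> Z \<Longrightarrow> v \<in> verts G \<Longrightarrow> {z, v} \<in> edges J"
  unfolding edges_J by blast

lemma no_apex_apex_edge: "z \<in> Z \<Longrightarrow> z' \<in> Z \<Longrightarrow> {z, z'} \<notin> edges J"
  using edge_G_subset[of "{z, z'}"] disjoint unfolding edges_J by (auto simp: doubleton_eq_iff)

lemma edge_J_in_G: "u \<in> verts G \<Longrightarrow> v \<in> verts G \<Longrightarrow> {u, v} \<in> edges J \<Longrightarrow> {u, v} \<in> edges G"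
  using disjoint unfolding edges_J by (auto simp: doubleton_eq_iff)

lemma apex_triangle_in_J:
  assumes "e \<in> edges G" "z \<in> Z"
  shows "is_triangle_in J (insert z e)"
proof -
  obtain u v where uv: "e = {u, v}" "u \<noteq> v" "u \<in> verts G" "v \<in> verts G"
    using assms(1) by (rule edge_G_obtain)
  have "z \<noteq> u" "z \<noteq> v" using assms(2) uv disjoint by auto
  then show ?thesis
    using uv assms apex_edge_in_J[of z u] apex_edge_in_J[of z v]
    by (auto simp: is_triangle_in_def tri_edges_triple verts_J edges_J)
qed

definition apex_triangles :: "('a set \<Rightarrow> nat) \<Rightarrow> 'a set set" where
  "apex_triangles c = (\<lambda>e. insert (\<zeta> (c e)) e) ` edges G"

context
  fixes c :: "'a set \<Rightarrow> nat"
  assumes colouring: "proper_edge_colouring G k c"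
begin

lemma apex_colour_in_Z: "e \<in> edges G \<Longrightarrow> \<zeta> (c e) \<in> Z"
  using colouring apex_bij by (auto simp: proper_edge_colouring_def bij_betw_def)

lemma apex_triangles_cover_edge_G:
  assumes e: "e \<in> edges G"
  shows "\<exists>!T. T \<in> apex_triangles c \<and> e \<in> tri_edges T"
proof (rule ex1I[of _ "insert (\<zeta> (c e)) e"])
  show "insert (\<zeta> (c e)) e \<in> apex_triangles c \<and> e \<in> tri_edges (insert (\<zeta> (c e)) e)"
    using e card_edge_G by (auto simp: apex_triangles_def tri_edges_def)
next
  fix T assume "T \<in> apex_triangles c \<and> e \<in> tri_edges T"
  then obtain f where f: "f \<in> edges G" "T = insert (\<zeta> (c f)) f" "e \<subseteq> insert (\<zeta> (c f)) f"
    by (auto simp: apex_triangles_def tri_edges_def)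
  then have "e \<subseteq> f" using apex_notin_edge[OF apex_colour_in_Z[OF f(1)] e] by blast
  moreover have "finite f" "card e = card f" using e f(1) card_edge_G by (auto intro: card_ge_0_finite)
  ultimately have "e = f" by (simp add: card_subset_eq)
  then show "T = insert (\<zeta> (c e)) e" using f by simp
qed

lemma apex_triangles_cover_apex_edge:
  assumes z: "z \<in> Z" and y: "y \<in> verts G"
  shows "\<exists>!T. T \<in> apex_triangles c \<and> {z, y} \<in> tri_edges T"
proof -
  obtain i where i: "i < k" "z = \<zeta> i"
    using z apex_bij by (auto simp: bij_betw_def)
  have star: "bij_betw c {e \<in> edges G. y \<in> e} {..<k}"
    using proper_edge_colouring_bij_betw_star[OF colouring regular[OF y]] .
  then have "i \<in> c ` {e \<in> edges G. y \<in> e}" using i(1) by (simp add: bij_betw_def)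
  then obtain f where f: "f \<in> edges G" "y \<in> f" "c f = i" by blast
  have "z \<noteq> y" using z y disjoint by blast
  show ?thesis
  proof (rule ex1I[of _ "insert z f"])
    show "insert z f \<in> apex_triangles c \<and> {z, y} \<in> tri_edges (insert z f)"
      using f i \<open>z \<noteq> y\<close> by (auto simp: apex_triangles_def intro!: doubleton_in_tri_edges)
  next
    fix T assume "T \<in> apex_triangles c \<and> {z, y} \<in> tri_edges T"
    then obtain g where g: "g \<in> edges G" "T = insert (\<zeta> (c g)) g" "z \<in> T" "y \<in> T"
      by (auto simp: apex_triangles_def tri_edges_def)
    have "z = \<zeta> (c g)" using g apex_notin_edge[OF z] by blast
    then have "c g = c f"
      using i f g colouring apex_bij by (auto simp: proper_edge_colouring_def bij_betw_def inj_on_def)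
    moreover have "y \<in> g" using g y apex_colour_in_Z disjoint by blast
    ultimately have "g = f" using star f g by (auto simp: bij_betw_def inj_on_def)
    then show "T = insert z f" using g \<open>z = \<zeta> (c g)\<close> by simp
  qed
qed

lemma K3_decomposition_apex_triangles: "K3_decomposition J (apex_triangles c)"
  unfolding K3_decomposition_def
proof (intro conjI ballI)
  fix T assume "T \<in> apex_triangles c"
  then show "is_triangle_in J T"
    using apex_triangle_in_J apex_colour_in_Z by (auto simp: apex_triangles_def)
next
  fix e assume "e \<in> edges J"
  then consider "e \<in> edges G" | z y where "z \<in> Z" "y \<in> verts G" "e = {z, y}"
    by (auto simp: edges_J)
  then show "\<exists>!T. T \<in> apex_triangles c \<and> e \<in> tri_edges T"
    using apex_triangles_cover_edge_G apex_triangles_cover_apex_edge by cases auto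
qed

end

end

locale apex_saturated_packing = regular_join +
  fixes H :: "'a graph" and \<T> :: "'a set set"
  assumes packing: "K3_packing J H \<T>"
    and saturated: "\<And>e. e \<in> edges J \<Longrightarrow> e \<inter> Z \<noteq> {} \<Longrightarrow> e \<in> edges H"
begin

lemma decomposition: "K3_decomposition H \<T>"
  using packing by (simp add: K3_packing_def)

lemma triangle_in_J: "T \<in> \<T> \<Longrightarrow> card T = 3 \<and> T \<subseteq> verts J \<and> tri_edges T \<subseteq> edges J"
  using packing unfolding K3_packing_def K3_decomposition_def subgraph_def is_triangle_in_def
  by blast

lemma triangle_through_apex_edge:
  assumes z: "z \<in> Z" and v: "v \<in> verts G"
  shows "\<exists>w. {z, v, w} \<in> \<T> \<and> {v, w} \<in> edges G"
proof -
  have "z \<noteq> v" using z v disjoint by blast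
  have "{z, v} \<in> edges H" using saturated[OF apex_edge_in_J[OF z v]] z by blast
  then obtain T where T: "T \<in> \<T>" "{z, v} \<in> tri_edges T"
    using decomposition by (auto simp: K3_decomposition_def)
  have "card T = 3" using triangle_in_J[OF T(1)] by blast
  moreover have "z \<in> T" "v \<in> T" using T(2) by (auto simp: tri_edges_def)
  ultimately obtain w where w: "T = {z, v, w}" "w \<noteq> z" "w \<noteq> v"
    using \<open>z \<noteq> v\<close> by (rule card_3_obtain_third)
  have "tri_edges T \<subseteq> edges J" using triangle_in_J[OF T(1)] by blast
  then have zw: "{z, w} \<in> edges J" and vw: "{v, w} \<in> edges J"
    using w doubleton_in_tri_edges[of z w T] doubleton_in_tri_edges[of v w T] by auto
  have "w \<in> verts G"
    using triangle_in_J[OF T(1)] w no_apex_apex_edge[OF z _ ] zw by (auto simp: verts_J)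
  then show ?thesis using T(1) w edge_J_in_G[OF v _ vw] by blast
qed

lemma edge_G_in_apex_triangle:
  assumes e: "e \<in> edges G"
  shows "\<exists>z\<in>Z. insert z e \<in> \<T>"
proof -
  obtain u v where uv: "e = {u, v}" "u \<noteq> v" "u \<in> verts G" "v \<in> verts G"
    using e by (rule edge_G_obtain)
  define other where "other z = (SOME w. {z, v, w} \<in> \<T> \<and> {v, w} \<in> edges G)" for z
  have other: "{z, v, other z} \<in> \<T>" "{v, other z} \<in> edges G" if "z \<in> Z" for z
    using someI_ex[OF triangle_through_apex_edge[OF that uv(4)]] unfolding other_def by blast+
  let ?S = "{f \<in> edges G. v \<in> f}"
  have inj: "inj_on (\<lambda>z. {v, other z}) Z"
  proof (rule inj_onI)
    fix z z' assume zz': "z \<in> Z" "z' \<in> Z" "{v, other z} = {v, other z'}"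
    have "v \<noteq> other z" using card_edge_G[OF other(2)[OF zz'(1)]] by auto
    with zz'(3) have "other z = other z'" by (auto simp: doubleton_eq_iff)
    then have "{z, v, other z} = {z', v, other z'}"
      using K3_decomposition_triangle_eq[OF decomposition other(1)[OF zz'(1)] other(1)[OF zz'(2)],
          of v "other z"] \<open>v \<noteq> other z\<close> by simp
    then have "z \<in> {z', v, other z'}" by blast
    moreover have "z \<notin> {v, other z'}" using apex_notin_edge[OF zz'(1) other(2)[OF zz'(2)]] .
    ultimately show "z = z'" by blast
  qed
  have sub: "(\<lambda>z. {v, other z}) ` Z \<subseteq> ?S" using other by auto
  have "card ((\<lambda>z. {v, other z}) ` Z) = card ?S"
    using card_image[OF inj] card_star[OF uv(4)] bij_betw_same_card[OF apex_bij] by simp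
  then have "(\<lambda>z. {v, other z}) ` Z = ?S" using card_subset_eq[OF finite_star sub] by blast
  moreover have "e \<in> ?S" using e uv by blast
  ultimately obtain z where z: "z \<in> Z" "e = {v, other z}" by blast
  then have "insert z e \<in> \<T>" using other(1) by simp
  with z(1) show ?thesis by blast
qed

lemma apex_triangles_of_adjacent_edges:
  assumes "z \<in> Z" "e \<in> edges G" "f \<in> edges G" "e \<inter> f \<noteq> {}"
    and "insert z e \<in> \<T>" "insert z f \<in> \<T>"
  shows "e = f"
proof -
  obtain v where v: "v \<in> e" "v \<in> f" using assms(4) by blast
  have "z \<noteq> v" using assms(1,2) v apex_notin_edge by blast
  then have "insert z e = insert z f"
    using K3_decomposition_triangle_eq[OF decomposition assms(5,6), of z v] v by blast
  then show ?thesis using assms(1-3) apex_notin_edge by (metis insert_ident)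
qed

lemma edge_colourable_by_apices: "edge_colourable G k"
proof -
  define c where "c e = (SOME i. i < k \<and> insert (\<zeta> i) e \<in> \<T>)" for e
  have c: "c e < k \<and> insert (\<zeta> (c e)) e \<in> \<T>" if "e \<in> edges G" for e
  proof -
    have "\<exists>i. i < k \<and> insert (\<zeta> i) e \<in> \<T>"
      using edge_G_in_apex_triangle[OF that] apex_bij by (auto simp: bij_betw_def)
    then show ?thesis unfolding c_def by (rule someI_ex)
  qed
  have "proper_edge_colouring G k c"
    unfolding proper_edge_colouring_def
  proof (intro conjI ballI impI)
    fix e f assume e: "e \<in> edges G" and f: "f \<in> edges G" and ef: "e \<noteq> f \<and> e \<inter> f \<noteq> {}"
    show "c e \<noteq> c f"
    proof
      assume "c e = c f"
      then have "insert (\<zeta> (c e)) f \<in> \<T>" using c[OF f] by simp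
      moreover have "\<zeta> (c e) \<in> Z" using c[OF e] apex_bij by (auto simp: bij_betw_def)
      ultimately have "e = f" using apex_triangles_of_adjacent_edges e f ef c[OF e] by blast
      with ef show False by blast
    qed
  qed (use c in blast)
  then show ?thesis by (auto simp: edge_colourable_def)
qed

end

lemma (in regular_join) leave_meets_apices:
  assumes "\<not> edge_colourable G k" "K3_packing J H \<T>"
  shows "\<exists>e\<in>edges (leave J H). e \<inter> Z \<noteq> {}"
proof (rule ccontr)
  assume "\<not> ?thesis"
  then interpret apex_saturated_packing G k Z \<zeta> H \<T>
    using assms(2) by unfold_locales (auto simp: leave_def edges_def)
  show False using edge_colourable_by_apices assms(1) by blast
qed

theorem lemma5:
  fixes G :: "'a graph" and Z :: "'a set"
  assumes "cubic G" and "card Z = 3" and "Z \<inter> verts G = {}"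
  shows "(edge_colourable G 3 \<longrightarrow> (\<exists>\<T>. K3_decomposition (join (empty_graph Z) G) \<T>))
       \<and> (\<not> edge_colourable G 3 \<longrightarrow>
            (\<forall>H \<T>. K3_packing (join (empty_graph Z) G) H \<T> \<longrightarrow>
               (\<exists>e\<in>edges (leave (join (empty_graph Z) G) H). e \<inter> Z \<noteq> {})))"
proof -
  have "finite Z" using assms(2) by (metis card.infinite zero_neq_numeral)
  then obtain \<zeta> :: "nat \<Rightarrow> 'a" where "bij_betw \<zeta> {..<3} Z"
    using ex_bij_betw_nat_finite assms(2) by (metis atLeast0LessThan)
  then interpret regular_join G 3 Z \<zeta>
    using assms by unfold_locales (auto simp: cubic_def)
  show ?thesis
  proof (intro conjI impI allI)
    assume "edge_colourable G 3"
    then obtain c where "proper_edge_colouring G 3 c" by (auto simp: edge_colourable_def)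
    then show "\<exists>\<T>. K3_decomposition J \<T>" by (blast intro: K3_decomposition_apex_triangles)
  next
    fix H \<T> assume "\<not> edge_colourable G 3" "K3_packing J H \<T>"
    then show "\<exists>e\<in>edges (leave J H). e \<inter> Z \<noteq> {}" by (rule leave_meets_apices)
  qed
qed

end
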